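(* On $\hat N^{\bullet}_*=\bigcup_{n\ge1}\hat N^n$, with $+_{\nearrow}:=\nearrow$ and $+_{\nwarrow}:=\nwarrow$, the operation $\tilde\ltimes$ and the involution $\dagger$: (i) $\tilde\ltimes$ maps $\hat N^n\times\hat N^m$ into $\hat N^{nm}$, is associative, and is left distributive: $(\vec u+_{\nearrow}\vec v)\tilde\ltimes\vec w=(\vec u\tilde\ltimes\vec w)+_{\nearrow}(\vec v\tilde\ltimes\vec w)$ and $(\vec u+_{\nwarrow}\vec v)\tilde\ltimes\vec w=(\vec u\tilde\ltimes\vec w)+_{\nwarrow}(\vec v\tilde\ltimes\vec w)$; (ii) for all names $\vec u,\vec v$: $(\vec u+_{\nearrow}\vec v)^\dagger=\vec v^\dagger+_{\nwarrow}\vec u^\dagger$, $(\vec u+_{\nwarrow}\vec v)^\dagger=\vec v^\dagger+_{\nearrow}\vec u^\dagger$, and $(\vec u\tilde\ltimes\vec v)^\dagger=\vec u^\dagger\tilde\ltimes\vec v^\dagger$.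
   Context: $\hat N^n$ ($n\ge1$) is the set of names of planar rooted binary trees with $n$ internal vertices and $\hat N^0=\{()\}$ (the empty vector, name of the trivial tree). Equivalently, recursively: every element of $\hat N^n$, $n\ge1$, is uniquely of the form $\vec v_l\vee\vec v_r:=(\vec v_l,1,p+1+\vec v_r)$ with $\vec v_l\in\hat N^p$, $\vec v_r\in\hat N^q$, $p+q+1=n$, where $k+(w_1,\dots,w_q)=(w_1+k,\dots,w_q+k)$. For $\vec v\in\hat N^n,\vec w\in\hat N^m$: $\vec v\nearrow\vec w=(\vec v,n\triangleright w_1,\dots,n\triangleright w_m)$ with $n\triangleright a=a+n$ for $a\ne1$, $n\triangleright1=1$; $\vec v\nwarrow\vec w=(\vec v,n+\vec w)$; the empty vector $()$ is a two-sided unit for both. These satisfy $\vec v_l\vee\vec v_r=\vec v_l\nearrow(1)\nwarrow\vec v_r$. Universal expression: for a name $\vec v$ and a name $\vec x$ of degree $\ge1$, $\varpi_{()}(\vec x)=()$ and $\varpi_{\vec v}(\vec x)=\varpi_{\vec v_l}(\vec x)\nearrow\vec x\nwarrow\varpi_{\vec v_r}(\vec x)$ for $\vec v=\vec v_l\vee\vec v_r$. $L$-multiplication: $\vec u\tilde\ltimes\vec v:=\varpi_{\vec u}(\vec v)$. Dendriform involution: $()^\dagger=()$ and $(\vec v\vee\vec w)^\dagger=\vec w^\dagger\vee\vec v^\dagger$. *)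

theory Defs
  imports Main
begin

datatype btree = Leaf | Node btree btree

fun nodes :: "btree \<Rightarrow> nat" where
  "nodes Leaf = 0"
| "nodes (Node l r) = nodes l + nodes r + 1"

definition vee :: "nat list \<Rightarrow> nat list \<Rightarrow> nat list" where
  "vee v w = v @ [1] @ map (\<lambda>a. a + (length v + 1)) w"

fun name :: "btree \<Rightarrow> nat list" where
  "name Leaf = []"
| "name (Node l r) = vee (name l) (name r)"

definition hatN :: "nat \<Rightarrow> nat list set" where
  "hatN n = {name t | t. nodes t = n}"

definition Names :: "nat list set" where
  "Names = (\<Union>n. hatN n)"

definition NamesPos :: "nat list set" where
  "NamesPos = (\<Union>n\<in>{1..}. hatN n)"

definition tree_of :: "nat list \<Rightarrow> btree" where
  "tree_of v = (THE t. name t = v)"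

definition tri :: "nat \<Rightarrow> nat \<Rightarrow> nat" where
  "tri n a = (if a = 1 then 1 else a + n)"

definition nearrow :: "nat list \<Rightarrow> nat list \<Rightarrow> nat list" where
  "nearrow v w = v @ map (tri (length v)) w"

definition nwarrow :: "nat list \<Rightarrow> nat list \<Rightarrow> nat list" where
  "nwarrow v w = v @ map (\<lambda>a. a + length v) w"

fun varpi_t :: "btree \<Rightarrow> nat list \<Rightarrow> nat list" where
  "varpi_t Leaf x = []"
| "varpi_t (Node l r) x = nwarrow (nearrow (varpi_t l x) x) (varpi_t r x)"

definition varpi :: "nat list \<Rightarrow> nat list \<Rightarrow> nat list" where
  "varpi v x = varpi_t (tree_of v) x"

definition ltimes :: "nat list \<Rightarrow> nat list \<Rightarrow> nat list" where
  "ltimes u v = varpi u v"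

text \<open>Dendriform involution: ()^dagger = (), (v \<or> w)^dagger = w^dagger \<or> v^dagger.\<close>
fun mirror :: "btree \<Rightarrow> btree" where
  "mirror Leaf = Leaf"
| "mirror (Node l r) = Node (mirror r) (mirror l)"

definition dagger :: "nat list \<Rightarrow> nat list" where
  "dagger v = name (mirror (tree_of v))"

end

theory Submission
  imports Defs
begin

text \<open>Names encode trees injectively, and under this encoding nearrow and nwarrow are the
graftings over (onto the leftmost leaf) and under (onto the rightmost leaf), while ltimes u v
substitutes the tree of v for every internal vertex of the tree of u. Associativity and left
distributivity of substitution are then structural inductions on trees; the mirror image
exchanges leftmost and rightmost leaves, hence over and under, and commutes with substitution.
Since substituting the trivial tree yields the trivial tree, none of this needs positive degree.\<close>

fun over :: "btree \<Rightarrow> btree \<Rightarrow> btree" where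
  "over a Leaf = a"
| "over a (Node l r) = Node (over a l) r"

fun under :: "btree \<Rightarrow> btree \<Rightarrow> btree" where
  "under Leaf b = b"
| "under (Node l r) b = Node l (under r b)"

fun subst_nodes :: "btree \<Rightarrow> btree \<Rightarrow> btree" where
  "subst_nodes Leaf c = Leaf"
| "subst_nodes (Node l r) c = under (over (subst_nodes l c) c) (subst_nodes r c)"

lemma nodes_over [simp]: "nodes (over a b) = nodes a + nodes b"
  by (induction b) auto

lemma nodes_under [simp]: "nodes (under a b) = nodes a + nodes b"
  by (induction a) auto

lemma length_name: "length (name t) = nodes t"
  by (induction t) (auto simp: vee_def)

lemma name_pos: "x \<in> set (name t) \<Longrightarrow> 1 \<le> x"
  by (induction t arbitrary: x) (auto simp: vee_def)

lemma append_Cons_eq_iff_last: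
  assumes "x \<notin> set ys" and "x \<notin> set ys'"
  shows "xs @ x # ys = xs' @ x # ys' \<longleftrightarrow> xs = xs' \<and> ys = ys'"
proof
  show "xs @ x # ys = xs' @ x # ys' \<Longrightarrow> xs = xs' \<and> ys = ys'"
  proof (induction xs arbitrary: xs')
    case Nil
    with assms show ?case by (cases xs') auto
  next
    case (Cons a xs)
    with assms show ?case by (cases xs') auto
  qed
qed simp

lemma inj_name: "inj name"
proof (rule injI)
  fix s t :: btree
  show "name s = name t \<Longrightarrow> s = t"
  proof (induction s arbitrary: t)
    case Leaf
    then show ?case by (cases t) (auto simp: vee_def)
  next
    case (Node l r)
    then obtain l' r' where t: "t = Node l' r'"
      by (cases t) (auto simp: vee_def)
    define shift where "shift k = map (\<lambda>a::nat. a + (k + 1))" for k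
    have no_1: "1 \<notin> set (shift k (name u))" for k u
      by (auto simp: shift_def dest: name_pos)
    txt \<open>The root contributes the last entry 1 of a name.\<close>
    have "name l @ 1 # shift (length (name l)) (name r)
        = name l' @ 1 # shift (length (name l')) (name r')"
      using Node.prems t by (simp add: vee_def shift_def)
    then have l: "name l = name l'"
      and "shift (length (name l)) (name r) = shift (length (name l')) (name r')"
      unfolding append_Cons_eq_iff_last[OF no_1 no_1] by blast+
    moreover have "inj (\<lambda>a::nat. a + (k + 1))" for k
      by (simp add: inj_def)
    ultimately have "name r = name r'"
      by (simp add: shift_def inj_map_eq_map)
    with l t show ?case
      using Node.IH by blast
  qed
qed

lemma tree_of_name [simp]: "tree_of (name t) = t"
  unfolding tree_of_def using inj_name by (auto dest: injD)

lemma Names_eq: "Names = range name"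
  by (auto simp: Names_def hatN_def)

lemma NamesPos_subset_Names: "NamesPos \<subseteq> Names"
  by (auto simp: NamesPos_def Names_def)

lemma nearrow_name: "nearrow (name a) (name b) = name (over a b)"
proof (induction b)
  case Leaf
  then show ?case by (simp add: nearrow_def)
next
  case (Node l r)
  txt \<open>The entries of the right subtree differ from 1, so tri just shifts them.\<close>
  have shift: "map (tri (length (name a))) (map (\<lambda>x. x + (length (name l) + 1)) (name r))
      = map (\<lambda>x. x + (length (name (over a l)) + 1)) (name r)"
    using name_pos[of _ r] by (auto simp: tri_def length_name)
  have "nearrow (name a) (name (Node l r))
      = nearrow (name a) (name l) @ [1]
        @ map (tri (length (name a))) (map (\<lambda>x. x + (length (name l) + 1)) (name r))"
    by (simp add: nearrow_def vee_def tri_def)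
  also have "\<dots> = name (over a (Node l r))"
    by (simp only: Node.IH shift) (simp add: vee_def)
  finally show ?case .
qed

lemma nwarrow_name: "nwarrow (name a) (name b) = name (under a b)"
proof (induction a)
  case Leaf
  then show ?case by (simp add: nwarrow_def)
next
  case (Node l r)
  have "name (under (Node l r) b) = vee (name l) (nwarrow (name r) (name b))"
    by (simp add: Node.IH)
  then show ?case
    by (simp add: nwarrow_def vee_def length_name algebra_simps)
qed

lemma ltimes_name: "ltimes (name a) (name b) = name (subst_nodes a b)"
proof -
  have "varpi_t a (name b) = name (subst_nodes a b)"
    by (induction a) (simp_all add: nearrow_name nwarrow_name)
  then show ?thesis
    by (simp add: ltimes_def varpi_def)
qed

lemma dagger_name: "dagger (name a) = name (mirror a)"
  by (simp add: dagger_def)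

lemma nodes_subst_nodes: "nodes (subst_nodes a b) = nodes a * nodes b"
  by (induction a) (auto simp: algebra_simps)

lemma over_assoc: "over (over a b) c = over a (over b c)"
  by (induction c) auto

lemma under_assoc: "under (under a b) c = under a (under b c)"
  by (induction a) auto

lemma over_under: "b \<noteq> Leaf \<Longrightarrow> over a (under b c) = under (over a b) c"
  by (cases b) auto

lemma over_eq_Leaf_iff: "over a c = Leaf \<longleftrightarrow> a = Leaf \<and> c = Leaf"
  by (cases c) auto

lemma subst_nodes_Leaf: "subst_nodes a Leaf = Leaf"
  by (induction a) auto

lemma subst_nodes_over: "subst_nodes (over x y) c = over (subst_nodes x c) (subst_nodes y c)"
proof (cases "c = Leaf")
  case True
  then show ?thesis by (simp add: subst_nodes_Leaf)
next
  case False
  then show ?thesis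
    by (induction y) (auto simp: over_assoc over_under over_eq_Leaf_iff)
qed

lemma subst_nodes_under: "subst_nodes (under x y) c = under (subst_nodes x c) (subst_nodes y c)"
  by (induction x) (auto simp: under_assoc)

lemma subst_nodes_assoc: "subst_nodes (subst_nodes a b) c = subst_nodes a (subst_nodes b c)"
  by (induction a) (auto simp: subst_nodes_over subst_nodes_under)

lemma mirror_over: "mirror (over a b) = under (mirror b) (mirror a)"
  by (induction b) auto

lemma mirror_under: "mirror (under a b) = over (mirror b) (mirror a)"
  by (induction a) auto

lemma mirror_eq_Leaf_iff: "mirror b = Leaf \<longleftrightarrow> b = Leaf"
  by (cases b) auto

lemma mirror_subst_nodes: "mirror (subst_nodes a b) = subst_nodes (mirror a) (mirror b)"
proof (cases "b = Leaf")
  case True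
  then show ?thesis by (simp add: subst_nodes_Leaf)
next
  case False
  then show ?thesis
    by (induction a) (auto simp: mirror_over mirror_under over_under mirror_eq_Leaf_iff)
qed

theorem mainTheorem8:
  shows "(\<forall>n m u v. n \<ge> 1 \<longrightarrow> m \<ge> 1 \<longrightarrow> u \<in> hatN n \<longrightarrow> v \<in> hatN m
            \<longrightarrow> ltimes u v \<in> hatN (n * m))
    \<and> (\<forall>u\<in>NamesPos. \<forall>v\<in>NamesPos. \<forall>w\<in>NamesPos.
            ltimes (ltimes u v) w = ltimes u (ltimes v w))
    \<and> (\<forall>u\<in>NamesPos. \<forall>v\<in>NamesPos. \<forall>w\<in>NamesPos.
            ltimes (nearrow u v) w = nearrow (ltimes u w) (ltimes v w)
          \<and> ltimes (nwarrow u v) w = nwarrow (ltimes u w) (ltimes v w))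
    \<and> (\<forall>u\<in>Names. \<forall>v\<in>Names.
            dagger (nearrow u v) = nwarrow (dagger v) (dagger u)
          \<and> dagger (nwarrow u v) = nearrow (dagger v) (dagger u)
          \<and> dagger (ltimes u v) = ltimes (dagger u) (dagger v))"
proof (intro conjI allI impI)
  show "ltimes u v \<in> hatN (n * m)" if "u \<in> hatN n" "v \<in> hatN m" for n m u v
    using that by (auto simp: hatN_def ltimes_name nodes_subst_nodes)
  have NamesPos_E: "u \<in> NamesPos \<Longrightarrow> \<exists>a. u = name a" for u
    using NamesPos_subset_Names by (auto simp: Names_eq)
  show "\<forall>u\<in>NamesPos. \<forall>v\<in>NamesPos. \<forall>w\<in>NamesPos.
      ltimes (ltimes u v) w = ltimes u (ltimes v w)"
    by (auto dest!: NamesPos_E simp: ltimes_name subst_nodes_assoc)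
  show "\<forall>u\<in>NamesPos. \<forall>v\<in>NamesPos. \<forall>w\<in>NamesPos.
      ltimes (nearrow u v) w = nearrow (ltimes u w) (ltimes v w)
    \<and> ltimes (nwarrow u v) w = nwarrow (ltimes u w) (ltimes v w)"
    by (auto dest!: NamesPos_E simp: ltimes_name nearrow_name nwarrow_name
        subst_nodes_over subst_nodes_under)
  show "\<forall>u\<in>Names. \<forall>v\<in>Names.
      dagger (nearrow u v) = nwarrow (dagger v) (dagger u)
    \<and> dagger (nwarrow u v) = nearrow (dagger v) (dagger u)
    \<and> dagger (ltimes u v) = ltimes (dagger u) (dagger v)"
    by (auto simp: Names_eq dagger_name nearrow_name nwarrow_name ltimes_name
        mirror_over mirror_under mirror_subst_nodes)
qed

end
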